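(* Let $V$ be a finite set, $f:2^V\to\mathbb{R}_+$ nonnegative submodular with $f(\emptyset)=0$, $t_1,\ldots,t_k\in V$ distinct, and $\mathbf{x}=(x_{i,j})_{i\in[k],j\in V}$ with $x_{i,j}\ge0$, $\sum_{i=1}^k x_{i,j}=1$ for all $j\in V$, and $x_{i,t_i}=1$ for all $i$. For $\theta\in[0,1]$ let $A_i(\theta)=\{j: x_{i,j}>\theta\}$ and $B(\theta)=\{j: 1-\max_i x_{i,j}\ge\theta\}$. Then $$\sum_{i=1}^k\int_0^{1/2} f(A_i(\theta))\,d\theta\ \ge\ \sum_{i=1}^k\int_0^{1/2} f(A_i(\theta)\cup B(\theta))\,d\theta-(k-2)\int_0^{1/2} f(B(\theta))\,d\theta.$$ *)

theory Defs
  imports "HOL-Analysis.Analysis"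
begin

definition submodular_on :: "'a set \<Rightarrow> ('a set \<Rightarrow> real) \<Rightarrow> bool" where
  "submodular_on V f \<longleftrightarrow>
     (\<forall>S T. S \<subseteq> V \<longrightarrow> T \<subseteq> V \<longrightarrow> f (S \<union> T) + f (S \<inter> T) \<le> f S + f T)"

end

theory Submission
  imports Defs
begin

text \<open>
  The Lovasz extension \<open>L c = \<integral>\<^sub>[\<^sub>0\<^sub>,\<^sub>1\<^sub>] f {j. r < c j} dr\<close> of a submodular \<open>f\<close> is
  subadditive on nonnegative vectors \<open>a\<close>, \<open>c\<close> with \<open>a + c \<le> 1\<close>: peeling off the lowest level
  \<open>w \<cdot> 1\<^sub>S\<close> of \<open>a\<close> reduces this to \<open>L (c + w \<cdot> 1\<^sub>S) \<le> L c + w \<cdot> f S\<close>, which is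
  submodularity of \<open>f\<close> integrated over \<open>r\<close>, combined with a shift of \<open>r\<close> by \<open>w\<close>.

  With \<open>m j = max\<^sub>i x i j\<close> and \<open>c\<^sub>i = min x\<^sub>i (1 - m)\<close>: up to finitely many \<open>\<theta>\<close> we have
  \<open>A\<^sub>i \<theta> \<inter> B \<theta> = {j. \<theta> < c\<^sub>i j}\<close>, and \<open>c\<^sub>i \<le> 1/2\<close>, so the integral of \<open>f (A\<^sub>i \<inter> B)\<close>
  over \<open>[0,1/2]\<close> is \<open>L c\<^sub>i\<close>. The \<open>c\<^sub>i\<close> add up to \<open>2 \<cdot> min (1 - m) (1/2)\<close>, whose Lovasz
  extension is twice the integral of \<open>f B\<close> over \<open>[0,1/2]\<close>. Hence
  \<open>2 \<integral> f B \<le> \<Sum>\<^sub>i \<integral> f (A\<^sub>i \<inter> B)\<close>, and adding the integrated submodular inequalities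
  \<open>f (A\<^sub>i \<union> B) + f (A\<^sub>i \<inter> B) \<le> f A\<^sub>i + f B\<close> gives the claim.
\<close>

lemma threshold_set_measurable:
  assumes "finite V" and "\<And>j. j \<in> V \<Longrightarrow> Measurable.pred borel (P j)"
  shows "(\<lambda>\<theta>. {j\<in>V. P j \<theta>}) \<in> borel \<rightarrow>\<^sub>M count_space (Pow V)"
proof (subst measurable_count_space_eq_countable)
  show "countable (Pow V)"
    using assms(1) by (simp add: countable_finite)
  have "(\<lambda>\<theta>. {j\<in>V. P j \<theta>}) -` {T} \<inter> space borel \<in> sets borel" if "T \<subseteq> V" for T
  proof -
    have "(\<lambda>\<theta>. {j\<in>V. P j \<theta>}) -` {T} \<inter> space borel = {\<theta>. \<forall>j\<in>V. P j \<theta> \<longleftrightarrow> j \<in> T}"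
      using that by auto
    also have "\<dots> \<in> sets borel"
      using assms by measurable
    finally show ?thesis .
  qed
  then show "(\<lambda>\<theta>. {j\<in>V. P j \<theta>}) \<in> space borel \<rightarrow> Pow V \<and>
      (\<forall>T\<in>Pow V. (\<lambda>\<theta>. {j\<in>V. P j \<theta>}) -` {T} \<inter> space borel \<in> sets borel)"
    by auto
qed

lemma threshold_setfun_integrable:
  fixes f :: "'a set \<Rightarrow> real" and P :: "'a \<Rightarrow> real \<Rightarrow> bool"
  assumes "finite V" and "\<And>j. j \<in> V \<Longrightarrow> Measurable.pred borel (P j)"
  shows "(\<lambda>\<theta>. f {j\<in>V. P j \<theta>}) integrable_on {a..b}"
proof (rule measurable_bounded_by_integrable_imp_integrable_real)
  have "(\<lambda>\<theta>. {j\<in>V. P j \<theta>}) \<in> borel \<rightarrow>\<^sub>M count_space (Pow V)"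
    using assms by (rule threshold_set_measurable)
  then have "(\<lambda>\<theta>. f {j\<in>V. P j \<theta>}) \<in> borel_measurable borel"
    by (rule measurable_compose) simp
  then show "(\<lambda>\<theta>. f {j\<in>V. P j \<theta>}) \<in> borel_measurable (lebesgue_on {a..b})"
    by (simp add: measurable_completion measurable_restrict_space1)
  show "\<bar>f {j\<in>V. P j \<theta>}\<bar> \<le> (\<Sum>T\<in>Pow V. \<bar>f T\<bar>)" for \<theta>
    using assms(1) by (auto intro: member_le_sum)
qed auto

lemma integral_vanishing_tail:
  fixes g :: "real \<Rightarrow> real"
  assumes "a \<le> u" "u \<le> b" "g integrable_on {a..b}"
    and "\<And>r. u < r \<Longrightarrow> r \<le> b \<Longrightarrow> g r = 0"
  shows "integral {a..b} g = integral {a..u} g"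
proof -
  have "integral {u..b} g = integral {u..b} (\<lambda>_. 0)"
    by (rule integral_spike[of "{u}"]) (use assms(4) in auto)
  then show ?thesis
    using Henstock_Kurzweil_Integration.integral_combine[OF assms(1-3)] by simp
qed

lemma integral_unit_interval_shift:
  fixes g :: "real \<Rightarrow> real"
  assumes "g integrable_on {-w..1}" "0 \<le> w" "w \<le> 1"
    and "\<And>r. -w \<le> r \<Longrightarrow> r < 0 \<Longrightarrow> g r = c"
    and "\<And>r. 1 - w < r \<Longrightarrow> r \<le> 1 \<Longrightarrow> g r = 0"
  shows "integral {0..1} (\<lambda>r. g (r - w)) = w * c + integral {0..1} g"
proof -
  have int: "g integrable_on {u..v}" if "-w \<le> u" "v \<le> 1" for u v
    using integrable_on_subinterval[OF assms(1)] that by auto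
  have "integral {0..1} (\<lambda>r. g (r - w)) = integral {-w..1-w} g"
    using integral_shift_real_ivl[of "-w" "-w" "1 - w" g] by simp
  also have "\<dots> = integral {-w..0} g + integral {0..1-w} g"
    by (rule Henstock_Kurzweil_Integration.integral_combine[symmetric]) (use assms int in auto)
  also have "integral {-w..0} g = integral {-w..0} (\<lambda>_. c)"
    by (rule integral_spike[of "{0}"]) (use assms(4) in auto)
  also have "integral {0..1-w} g = integral {0..1} g"
    by (rule integral_vanishing_tail[symmetric]) (use assms int in auto)
  finally show ?thesis
    using assms(2) by simp
qed

lemma integral_submodular_threshold:
  fixes f :: "'a set \<Rightarrow> real" and P Q :: "'a \<Rightarrow> real \<Rightarrow> bool"
  assumes V: "finite V" and sub: "submodular_on V f"
    and P: "\<And>j. j \<in> V \<Longrightarrow> Measurable.pred borel (P j)"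
    and Q: "\<And>j. j \<in> V \<Longrightarrow> Measurable.pred borel (Q j)"
  shows "integral {a..b} (\<lambda>r. f ({j\<in>V. P j r} \<union> {j\<in>V. Q j r}))
           + integral {a..b} (\<lambda>r. f ({j\<in>V. P j r} \<inter> {j\<in>V. Q j r}))
         \<le> integral {a..b} (\<lambda>r. f {j\<in>V. P j r}) + integral {a..b} (\<lambda>r. f {j\<in>V. Q j r})"
proof -
  have Un: "{j\<in>V. P j r} \<union> {j\<in>V. Q j r} = {j\<in>V. P j r \<or> Q j r}"
    and Int: "{j\<in>V. P j r} \<inter> {j\<in>V. Q j r} = {j\<in>V. P j r \<and> Q j r}" for r
    by auto
  have int: "(\<lambda>r. f {j\<in>V. P j r}) integrable_on {a..b}" "(\<lambda>r. f {j\<in>V. Q j r}) integrable_on {a..b}"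
    "(\<lambda>r. f {j\<in>V. P j r \<or> Q j r}) integrable_on {a..b}"
    "(\<lambda>r. f {j\<in>V. P j r \<and> Q j r}) integrable_on {a..b}"
    using P Q by (intro threshold_setfun_integrable[OF V]; simp)+
  have "integral {a..b} (\<lambda>r. f {j\<in>V. P j r \<or> Q j r} + f {j\<in>V. P j r \<and> Q j r})
      \<le> integral {a..b} (\<lambda>r. f {j\<in>V. P j r} + f {j\<in>V. Q j r})"
    using sub int unfolding submodular_on_def Un[symmetric] Int[symmetric]
    by (intro integral_le integrable_add) auto
  then show ?thesis
    unfolding Un Int using int by (simp add: integral_add)
qed

text \<open>For \<open>c\<close> with values in \<open>[0,1]\<close> this is the Lovasz extension of \<open>f\<close>.\<close>

definition lovasz_extension :: "'a set \<Rightarrow> ('a set \<Rightarrow> real) \<Rightarrow> ('a \<Rightarrow> real) \<Rightarrow> real" where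
  "lovasz_extension V f c = integral {0..1} (\<lambda>r. f {j\<in>V. r < c j})"

lemma lovasz_extension_integrable:
  fixes f :: "'a set \<Rightarrow> real" and c :: "'a \<Rightarrow> real"
  assumes "finite V"
  shows "(\<lambda>r. f {j\<in>V. r < c j}) integrable_on {a..b}"
  by (rule threshold_setfun_integrable[OF assms]) simp

lemma lovasz_extension_cong:
  assumes "\<And>j r. j \<in> V \<Longrightarrow> 0 \<le> r \<Longrightarrow> r < a j \<longleftrightarrow> r < b j"
  shows "lovasz_extension V f a = lovasz_extension V f b"
  unfolding lovasz_extension_def
proof (rule integral_cong)
  fix r :: real assume "r \<in> {0..1}"
  then have "{j\<in>V. r < a j} = {j\<in>V. r < b j}"
    using assms by auto
  then show "f {j\<in>V. r < a j} = f {j\<in>V. r < b j}"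
    by simp
qed

lemma lovasz_extension_eq_integral:
  fixes f :: "'a set \<Rightarrow> real"
  assumes "finite V" "f {} = 0" "0 \<le> u" "u \<le> 1" "\<And>j. j \<in> V \<Longrightarrow> c j \<le> u"
  shows "lovasz_extension V f c = integral {0..u} (\<lambda>r. f {j\<in>V. r < c j})"
  unfolding lovasz_extension_def
proof (rule integral_vanishing_tail)
  show "f {j\<in>V. r < c j} = 0" if "u < r" for r
  proof -
    have "{j\<in>V. r < c j} = {}"
      using assms(5) that by force
    then show ?thesis
      by (simp only: assms(2))
  qed
qed (use assms lovasz_extension_integrable in auto)

lemma lovasz_extension_nonpos:
  fixes f :: "'a set \<Rightarrow> real"
  assumes "finite V" "f {} = 0" "\<And>j. j \<in> V \<Longrightarrow> c j \<le> 0"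
  shows "lovasz_extension V f c = 0"
  using lovasz_extension_eq_integral[of V f 0 c] assms by simp

lemma lovasz_extension_scale:
  fixes f :: "'a set \<Rightarrow> real"
  assumes "finite V" "f {} = 0" "1 \<le> s" "\<And>j. j \<in> V \<Longrightarrow> s * c j \<le> 1"
  shows "lovasz_extension V f (\<lambda>j. s * c j) = s * lovasz_extension V f c"
proof -
  have c: "c j \<le> 1 / s" if "j \<in> V" for j
    using assms(3) assms(4)[OF that] by (simp add: field_simps)
  have "(\<lambda>x. x / s) ` {0..1} = {0..1/s}"
    using assms(3) by (auto simp: image_divide_atLeastAtMost)
  then have "integral {0..1/s} (\<lambda>r. f {j\<in>V. s * r < s * c j})
      = 1 / s * lovasz_extension V f (\<lambda>j. s * c j)"
    using integral_stretch_real[of s 0 1 "\<lambda>r. f {j\<in>V. r < s * c j}"] assms(3)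
    by (simp add: lovasz_extension_def)
  moreover have "lovasz_extension V f c = integral {0..1/s} (\<lambda>r. f {j\<in>V. s * r < s * c j})"
    using lovasz_extension_eq_integral[of V f "1/s" c] assms c by simp
  ultimately show ?thesis
    using assms(3) by simp
qed

lemma lovasz_extension_add_indicator_le:
  fixes f :: "'a set \<Rightarrow> real"
  assumes V: "finite V" and sub: "submodular_on V f" and f0: "f {} = 0"
    and S: "S \<subseteq> V" and w: "0 \<le> w" "w \<le> 1"
    and c0: "\<And>j. j \<in> S \<Longrightarrow> 0 \<le> c j" and c1: "\<And>j. j \<in> S \<Longrightarrow> c j + w \<le> 1"
  shows "lovasz_extension V f (\<lambda>j. c j + (if j \<in> S then w else 0))
         \<le> lovasz_extension V f c + w * f S"
proof -
  define E where "E r = {j\<in>V. j \<in> S \<and> r < c j}" for r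
  have Un: "{j\<in>V. r < c j} \<union> {j\<in>V. j \<in> S \<and> r - w < c j}
      = {j\<in>V. r < c j + (if j \<in> S then w else 0)}" for r
    using w by auto
  have Int: "{j\<in>V. r < c j} \<inter> {j\<in>V. j \<in> S \<and> r - w < c j} = E r" for r
    unfolding E_def using w by auto
  have "lovasz_extension V f (\<lambda>j. c j + (if j \<in> S then w else 0)) + integral {0..1} (\<lambda>r. f (E r))
      \<le> lovasz_extension V f c + integral {0..1} (\<lambda>r. f (E (r - w)))"
    using integral_submodular_threshold[OF V sub, of "\<lambda>j r. r < c j" "\<lambda>j r. j \<in> S \<and> r - w < c j" 0 1]
    unfolding Un Int lovasz_extension_def by (simp add: E_def)
  also have "integral {0..1} (\<lambda>r. f (E (r - w))) = w * f S + integral {0..1} (\<lambda>r. f (E r))"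
  proof (rule integral_unit_interval_shift[OF _ w])
    show "(\<lambda>r. f (E r)) integrable_on {-w..1}"
      unfolding E_def by (rule threshold_setfun_integrable[OF V]) simp
    show "f (E r) = f S" if "-w \<le> r" "r < 0" for r
    proof -
      have "E r = S"
        unfolding E_def using that S c0 by force
      then show ?thesis
        by simp
    qed
    show "f (E r) = 0" if "1 - w < r" "r \<le> 1" for r
    proof -
      have "E r = {}"
        unfolding E_def using that c1 by force
      then show ?thesis
        by (simp only: f0)
    qed
  qed
  finally show ?thesis
    by simp
qed

lemma lovasz_extension_peel_layer:
  fixes f :: "'a set \<Rightarrow> real"
  assumes V: "finite V" and f0: "f {} = 0" and w: "0 \<le> w" "w \<le> 1"
    and a1: "\<And>j. j \<in> V \<Longrightarrow> a j \<le> 1" and aw: "\<And>j. j \<in> V \<Longrightarrow> 0 < a j \<Longrightarrow> w \<le> a j"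
  shows "lovasz_extension V f a
         = w * f {j\<in>V. 0 < a j} + lovasz_extension V f (\<lambda>j. max 0 (a j - w))"
proof -
  define g where "g r = f {j\<in>V. r < a j - w}" for r
  have "lovasz_extension V f a = integral {0..1} (\<lambda>r. g (r - w))"
    unfolding lovasz_extension_def g_def by simp
  also have "\<dots> = w * f {j\<in>V. 0 < a j} + integral {0..1} g"
  proof (rule integral_unit_interval_shift[OF _ w])
    show "g integrable_on {-w..1}"
      unfolding g_def by (rule threshold_setfun_integrable[OF V]) simp
    show "g r = f {j\<in>V. 0 < a j}" if "-w \<le> r" "r < 0" for r
    proof -
      have "{j\<in>V. r < a j - w} = {j\<in>V. 0 < a j}"
        using that aw by force
      then show ?thesis
        by (simp add: g_def)
    qed
    show "g r = 0" if "1 - w < r" "r \<le> 1" for r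
    proof -
      have "{j\<in>V. r < a j - w} = {}"
        using that a1 by force
      then show ?thesis
        by (simp only: g_def f0)
    qed
  qed
  also have "integral {0..1} g = lovasz_extension V f (\<lambda>j. a j - w)"
    unfolding g_def lovasz_extension_def ..
  also have "\<dots> = lovasz_extension V f (\<lambda>j. max 0 (a j - w))"
    by (rule lovasz_extension_cong) auto
  finally show ?thesis .
qed

lemma lovasz_extension_add_le:
  fixes f :: "'a set \<Rightarrow> real"
  assumes V: "finite V" and sub: "submodular_on V f" and f0: "f {} = 0"
    and "\<And>j. j \<in> V \<Longrightarrow> 0 \<le> a j" "\<And>j. j \<in> V \<Longrightarrow> 0 \<le> c j" "\<And>j. j \<in> V \<Longrightarrow> a j + c j \<le> 1"
  shows "lovasz_extension V f (\<lambda>j. a j + c j) \<le> lovasz_extension V f a + lovasz_extension V f c"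
  using assms(4-6)
proof (induction "card {j\<in>V. 0 < a j}" arbitrary: a c rule: less_induct)
  case less
  define S where "S = {j\<in>V. 0 < a j}"
  show ?case
  proof (cases "S = {}")
    case True
    then have a0: "a j = 0" if "j \<in> V" for j
      using less.prems(1)[OF that] that unfolding S_def by force
    then have "lovasz_extension V f (\<lambda>j. a j + c j) = lovasz_extension V f c"
      by (intro lovasz_extension_cong) simp
    then show ?thesis
      using lovasz_extension_nonpos[of V f a] V f0 a0 by simp
  next
    case False
    have "finite S"
      using V unfolding S_def by simp
    define w where "w = Min (a ` S)"
    have "w \<in> a ` S"
      unfolding w_def using \<open>finite S\<close> False by simp
    then obtain j0 where j0: "j0 \<in> S" "a j0 = w"
      by auto
    have wS: "w \<le> a j" if "j \<in> S" for j
      using \<open>finite S\<close> that unfolding w_def by simp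
    have w: "0 \<le> w" "w \<le> 1"
      using j0 less.prems unfolding S_def by force+
    define a' where "a' j = max 0 (a j - w)" for j
    have peel: "lovasz_extension V f a = w * f S + lovasz_extension V f a'"
      unfolding S_def a'_def
      by (rule lovasz_extension_peel_layer[of V f, OF V f0 w]) (use less.prems wS in \<open>force simp: S_def\<close>)+
    have decomp: "a j = a' j + (if j \<in> S then w else 0)" if "j \<in> V" for j
      using less.prems(1)[OF that] wS[of j] w(1) that unfolding a'_def S_def by auto
    have a': "0 \<le> a' j" "a' j + c j \<le> 1" if "j \<in> V" for j
      using decomp[OF that] less.prems(3)[OF that] w(1) by (auto simp: a'_def[of j] split: if_splits)
    have "lovasz_extension V f (\<lambda>j. a j + c j)
        = lovasz_extension V f (\<lambda>j. (a' j + c j) + (if j \<in> S then w else 0))"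
      using decomp by (intro lovasz_extension_cong) (simp add: algebra_simps)
    also have "\<dots> \<le> lovasz_extension V f (\<lambda>j. a' j + c j) + w * f S"
    proof (rule lovasz_extension_add_indicator_le[OF V sub f0 _ w])
      show "S \<subseteq> V"
        unfolding S_def by blast
      show "0 \<le> a' j + c j" "a' j + c j + w \<le> 1" if "j \<in> S" for j
        using that a'(1) decomp[of j] less.prems(2,3)[of j] unfolding S_def by auto
    qed
    also have "lovasz_extension V f (\<lambda>j. a' j + c j)
        \<le> lovasz_extension V f a' + lovasz_extension V f c"
    proof (rule less.hyps)
      have "{j\<in>V. 0 < a' j} \<subseteq> S" "j0 \<notin> {j\<in>V. 0 < a' j}"
        using w(1) j0 unfolding a'_def S_def by auto
      then have "{j\<in>V. 0 < a' j} \<subset> S"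
        using j0(1) by blast
      then show "card {j\<in>V. 0 < a' j} < card {j\<in>V. 0 < a j}"
        using \<open>finite S\<close> psubset_card_mono unfolding S_def by blast
    qed (use a' less.prems(2) in auto)
    finally show ?thesis
      using peel by linarith
  qed
qed

lemma lovasz_extension_sum_le:
  fixes f :: "'a set \<Rightarrow> real"
  assumes V: "finite V" and sub: "submodular_on V f" and f0: "f {} = 0" and "finite I"
    and "\<And>i j. i \<in> I \<Longrightarrow> j \<in> V \<Longrightarrow> 0 \<le> c i j" "\<And>j. j \<in> V \<Longrightarrow> (\<Sum>i\<in>I. c i j) \<le> 1"
  shows "lovasz_extension V f (\<lambda>j. \<Sum>i\<in>I. c i j) \<le> (\<Sum>i\<in>I. lovasz_extension V f (c i))"
  using assms(4-6)
proof (induction I rule: finite_induct)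
  case empty
  then show ?case
    using lovasz_extension_nonpos[of V f "\<lambda>_. 0"] V f0 by simp
next
  case (insert i I)
  have "lovasz_extension V f (\<lambda>j. \<Sum>i\<in>insert i I. c i j)
      = lovasz_extension V f (\<lambda>j. c i j + (\<Sum>i\<in>I. c i j))"
    using insert.hyps by simp
  also have "\<dots> \<le> lovasz_extension V f (c i) + lovasz_extension V f (\<lambda>j. \<Sum>i\<in>I. c i j)"
    by (rule lovasz_extension_add_le[OF V sub f0])
      (use insert in \<open>auto intro: sum_nonneg\<close>)
  also have "lovasz_extension V f (\<lambda>j. \<Sum>i\<in>I. c i j) \<le> (\<Sum>i\<in>I. lovasz_extension V f (c i))"
  proof (rule insert.IH)
    show "(\<Sum>i\<in>I. c i j) \<le> 1" if "j \<in> V" for j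
      using insert.prems(1)[of i j] insert.prems(2)[OF that] insert.hyps that by auto
  qed (use insert.prems in auto)
  finally show ?case
    using insert.hyps by simp
qed

lemma integral_threshold_ae_eq_lovasz_extension:
  fixes f :: "'a set \<Rightarrow> real"
  assumes "finite V" "f {} = 0" "0 \<le> u" "u \<le> 1" "\<And>j. j \<in> V \<Longrightarrow> c j \<le> u"
    and "negligible N" "\<And>\<theta>. \<theta> \<in> {0..u} - N \<Longrightarrow> X \<theta> = {j\<in>V. \<theta> < c j}"
  shows "integral {0..u} (\<lambda>\<theta>. f (X \<theta>)) = lovasz_extension V f c"
proof -
  have "integral {0..u} (\<lambda>\<theta>. f (X \<theta>)) = integral {0..u} (\<lambda>\<theta>. f {j\<in>V. \<theta> < c j})"
    by (rule integral_spike[OF assms(6)]) (simp add: assms(7))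
  also have "\<dots> = lovasz_extension V f c"
    by (rule lovasz_extension_eq_integral[symmetric]) (use assms in auto)
  finally show ?thesis .
qed

lemma Max_image_le_sum:
  fixes y :: "'i \<Rightarrow> real"
  assumes "finite I" "I \<noteq> {}" "\<And>i. i \<in> I \<Longrightarrow> 0 \<le> y i"
  shows "Max (y ` I) \<le> (\<Sum>i\<in>I. y i)"
  using assms by (subst Max_le_iff) (auto intro: member_le_sum)

lemma sum_min_one_minus_Max:
  fixes y :: "'i \<Rightarrow> real"
  assumes I: "finite I" and y0: "\<And>i. i \<in> I \<Longrightarrow> 0 \<le> y i" and y1: "(\<Sum>i\<in>I. y i) = 1"
  shows "(\<Sum>i\<in>I. min (y i) (1 - Max (y ` I))) = 2 * min (1 - Max (y ` I)) (1/2)"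
proof -
  define M where "M = Max (y ` I)"
  have "I \<noteq> {}"
    using y1 by auto
  then have "M \<in> y ` I"
    unfolding M_def using I by simp
  then obtain i0 where i0: "i0 \<in> I" "y i0 = M"
    by auto
  have le_M: "y i \<le> M" if "i \<in> I" for i
    unfolding M_def using I that by simp
  show ?thesis
  proof (cases "1/2 \<le> M")
    case True
    have rest: "(\<Sum>i\<in>I - {i0}. y i) = 1 - M"
      using sum.remove[OF I i0(1), of y] i0 y1 by simp
    then have "y i \<le> 1 - M" if "i \<in> I - {i0}" for i
      using member_le_sum[of i "I - {i0}" y] y0 I that by auto
    then have "(\<Sum>i\<in>I - {i0}. min (y i) (1 - M)) = 1 - M"
      using rest by (simp add: min_absorb1)
    then show ?thesis
      using sum.remove[OF I i0(1), of "\<lambda>i. min (y i) (1 - M)"] i0 True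
      unfolding M_def[symmetric] by simp
  next
    case False
    have "(\<Sum>i\<in>I. min (y i) (1 - M)) = (\<Sum>i\<in>I. y i)"
      using le_M False by (intro sum.cong) (fastforce intro: min_absorb1)+
    then show ?thesis
      using y1 False unfolding M_def[symmetric] by simp
  qed
qed

lemma twice_integral_one_minus_Max_le:
  fixes f :: "'a set \<Rightarrow> real" and x :: "'i \<Rightarrow> 'a \<Rightarrow> real"
  assumes V: "finite V" and sub: "submodular_on V f" and f0: "f {} = 0" and I: "finite I"
    and x0: "\<And>i j. i \<in> I \<Longrightarrow> j \<in> V \<Longrightarrow> 0 \<le> x i j"
    and x1: "\<And>j. j \<in> V \<Longrightarrow> (\<Sum>i\<in>I. x i j) = 1"
  defines "m \<equiv> \<lambda>j. MAX i\<in>I. x i j"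
  shows "2 * integral {0..1/2} (\<lambda>\<theta>. f {j\<in>V. \<theta> \<le> 1 - m j})
         \<le> (\<Sum>i\<in>I. integral {0..1/2} (\<lambda>\<theta>. f ({j\<in>V. \<theta> < x i j} \<inter> {j\<in>V. \<theta> \<le> 1 - m j})))"
proof -
  define c where "c i j = min (x i j) (1 - m j)" for i j
  define b where "b j = min (1 - m j) (1/2)" for j
  have b_le: "2 * b j \<le> 1" for j
    unfolding b_def by (simp add: min_def)
  have x_le_m: "x i j \<le> m j" if "i \<in> I" for i j
    unfolding m_def using I that by simp
  have m_le_1: "m j \<le> 1" if "j \<in> V" for j
    using Max_image_le_sum[OF I, of "\<lambda>i. x i j"] x0 x1[OF that] that unfolding m_def by force
  have c_sum: "(\<Sum>i\<in>I. c i j) = 2 * b j" if "j \<in> V" for j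
    unfolding c_def b_def m_def using sum_min_one_minus_Max[OF I] x0 x1 that by simp
  have N: "negligible (insert (1/2) ((\<lambda>j. 1 - m j) ` V))"
    using V by (intro negligible_finite) auto
  have "integral {0..1/2} (\<lambda>\<theta>. f {j\<in>V. \<theta> \<le> 1 - m j}) = lovasz_extension V f b"
    by (rule integral_threshold_ae_eq_lovasz_extension[of V f, OF V f0 _ _ _ N]) (auto simp: b_def min_def)
  then have "2 * integral {0..1/2} (\<lambda>\<theta>. f {j\<in>V. \<theta> \<le> 1 - m j}) = lovasz_extension V f (\<lambda>j. 2 * b j)"
    using lovasz_extension_scale[of V f 2 b] V f0 b_le by simp
  also have "\<dots> = lovasz_extension V f (\<lambda>j. \<Sum>i\<in>I. c i j)"
    using c_sum by (intro lovasz_extension_cong) simp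
  also have "\<dots> \<le> (\<Sum>i\<in>I. lovasz_extension V f (c i))"
    using x0 m_le_1 c_sum b_le
    by (intro lovasz_extension_sum_le[OF V sub f0 I]) (auto simp: c_def)
  also have "\<dots> = (\<Sum>i\<in>I. integral {0..1/2} (\<lambda>\<theta>. f ({j\<in>V. \<theta> < x i j} \<inter> {j\<in>V. \<theta> \<le> 1 - m j})))"
  proof (rule sum.cong[OF refl])
    fix i assume i: "i \<in> I"
    have "c i j \<le> 1/2" for j
      using x_le_m[OF i, of j] unfolding c_def min_def by auto
    moreover have "{j\<in>V. \<theta> < x i j} \<inter> {j\<in>V. \<theta> \<le> 1 - m j} = {j\<in>V. \<theta> < c i j}"
      if "\<theta> \<notin> (\<lambda>j. 1 - m j) ` V" for \<theta>
      using that unfolding c_def by force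
    ultimately show "lovasz_extension V f (c i)
        = integral {0..1/2} (\<lambda>\<theta>. f ({j\<in>V. \<theta> < x i j} \<inter> {j\<in>V. \<theta> \<le> 1 - m j}))"
      by (intro integral_threshold_ae_eq_lovasz_extension[of V f, OF V f0 _ _ _ N, symmetric]) auto
  qed
  finally show ?thesis .
qed

theorem lemma6:
  fixes V :: "'a set" and f :: "'a set \<Rightarrow> real" and k :: nat
    and t :: "nat \<Rightarrow> 'a" and x :: "nat \<Rightarrow> 'a \<Rightarrow> real"
  assumes "finite V"
    and "\<And>S. S \<subseteq> V \<Longrightarrow> f S \<ge> 0"
    and "submodular_on V f"
    and "f {} = 0"
    and "\<And>i. i \<in> {1..k} \<Longrightarrow> t i \<in> V"
    and "inj_on t {1..k}"
    and "\<And>i j. i \<in> {1..k} \<Longrightarrow> j \<in> V \<Longrightarrow> x i j \<ge> 0"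
    and "\<And>j. j \<in> V \<Longrightarrow> (\<Sum>i\<in>{1..k}. x i j) = 1"
    and "\<And>i. i \<in> {1..k} \<Longrightarrow> x i (t i) = 1"
  defines "A \<equiv> (\<lambda>i (\<theta>::real). {j\<in>V. x i j > \<theta>})"
    and "B \<equiv> (\<lambda>\<theta>::real. {j\<in>V. 1 - (MAX i\<in>{1..k}. x i j) \<ge> \<theta>})"
  shows "(\<Sum>i\<in>{1..k}. integral {0..1/2} (\<lambda>\<theta>. f (A i \<theta>)))
         \<ge> (\<Sum>i\<in>{1..k}. integral {0..1/2} (\<lambda>\<theta>. f (A i \<theta> \<union> B \<theta>)))
           - (real k - 2) * integral {0..1/2} (\<lambda>\<theta>. f (B \<theta>))"
proof -
  let ?I = "\<lambda>X. integral {0..1/2} (\<lambda>\<theta>. f (X \<theta>))"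
  have "2 * ?I B \<le> (\<Sum>i\<in>{1..k}. ?I (\<lambda>\<theta>. A i \<theta> \<inter> B \<theta>))"
    unfolding A_def B_def using assms(1,3,4,7,8)
    by (intro twice_integral_one_minus_Max_le) auto
  moreover have "(\<Sum>i\<in>{1..k}. ?I (\<lambda>\<theta>. A i \<theta> \<union> B \<theta>) + ?I (\<lambda>\<theta>. A i \<theta> \<inter> B \<theta>))
      \<le> (\<Sum>i\<in>{1..k}. ?I (A i) + ?I B)"
    unfolding A_def B_def
    by (intro sum_mono integral_submodular_threshold[OF assms(1,3)]) simp_all
  ultimately show ?thesis
    by (simp add: sum.distrib left_diff_distrib)
qed

end
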